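(* Let $K$ be a subcomplex of a simplicial complex $L$, and assume $K$ is balanced, with a fixed proper $(\dim K+1)$-coloring. Then there exists a complex $L'$ obtained from $L$ by a finite sequence of stellar subdivisions such that (i) $K$ is a subcomplex of $L'$, (ii) $L'$ is balanced, and (iii) there is a proper $(\dim L'+1)$-coloring of $L'$ extending the given coloring of $K$.
   Context: All simplicial complexes are finite abstract simplicial complexes. The stellar subdivision of $\Delta$ at a nonempty face $F$ is $\mathrm{sd}_F(\Delta)=\{G\in\Delta: F\not\subseteq G\}\cup(\overline{\{a\}}*\partial\overline{F}*\mathrm{lk}_\Delta(F))$, where $a$ is a new vertex, $\overline{F}$ is the simplex of all subsets of $F$, $\partial\overline{F}$ the complex of its proper subsets, $*$ the join, and $\mathrm{lk}_\Delta(F)=\{G\in\Delta: F\cap G=\emptyset, F\cup G\in\Delta\}$. A proper $m$-coloring maps vertices to $\{0,\dots,m-1\}$ with distinct colors on the endpoints of each edge; a $d$-dimensional complex is balanced if it has a proper $(d+1)$-coloring. *)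

theory Defs
  imports Main
begin

definition simplicial_complex :: "'a set set \<Rightarrow> bool" where
  "simplicial_complex \<Delta> \<longleftrightarrow> finite \<Delta> \<and> (\<forall>F\<in>\<Delta>. finite F) \<and> (\<forall>F\<in>\<Delta>. \<forall>G. G \<subseteq> F \<longrightarrow> G \<in> \<Delta>)"

definition vertices :: "'a set set \<Rightarrow> 'a set" where
  "vertices \<Delta> = \<Union>\<Delta>"

definition dim :: "'a set set \<Rightarrow> int" where
  "dim \<Delta> = (if \<Delta> = {} then -1 else Max ((\<lambda>F. int (card F)) ` \<Delta>) - 1)"

definition link :: "'a set set \<Rightarrow> 'a set \<Rightarrow> 'a set set" where
  "link \<Delta> F = {G \<in> \<Delta>. F \<inter> G = {} \<and> F \<union> G \<in> \<Delta>}"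

definition simplex :: "'a set \<Rightarrow> 'a set set" where
  "simplex F = Pow F"

definition boundary_simplex :: "'a set \<Rightarrow> 'a set set" where
  "boundary_simplex F = {G. G \<subset> F}"

definition join :: "'a set set \<Rightarrow> 'a set set \<Rightarrow> 'a set set" where
  "join \<Delta> \<Gamma> = {G \<union> H | G H. G \<in> \<Delta> \<and> H \<in> \<Gamma>}"

definition stellar :: "'a set set \<Rightarrow> 'a set \<Rightarrow> 'a \<Rightarrow> 'a set set" where
  "stellar \<Delta> F a = {G \<in> \<Delta>. \<not> F \<subseteq> G} \<union> join (join (simplex {a}) (boundary_simplex F)) (link \<Delta> F)"

definition stellar_step :: "'a set set \<Rightarrow> 'a set set \<Rightarrow> bool" where
  "stellar_step \<Delta> \<Delta>' \<longleftrightarrow> (\<exists>F a. F \<in> \<Delta> \<and> F \<noteq> {} \<and> a \<notin> vertices \<Delta> \<and> \<Delta>' = stellar \<Delta> F a)"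

definition proper_coloring :: "'a set set \<Rightarrow> nat \<Rightarrow> ('a \<Rightarrow> nat) \<Rightarrow> bool" where
  "proper_coloring \<Delta> m \<kappa> \<longleftrightarrow> (\<forall>v\<in>vertices \<Delta>. \<kappa> v < m) \<and>
     (\<forall>u v. {u, v} \<in> \<Delta> \<and> u \<noteq> v \<longrightarrow> \<kappa> u \<noteq> \<kappa> v)"

definition balanced :: "'a set set \<Rightarrow> bool" where
  "balanced \<Delta> \<longleftrightarrow> (\<exists>\<kappa>. proper_coloring \<Delta> (nat (dim \<Delta> + 1)) \<kappa>)"

end

theory Submission
  imports Defs "HOL-Library.Multiset"
begin

text \<open>The colouring of K is extended greedily with n = dim L + 1 colours. Every vertex x carries a
  set of forbidden colours, with the invariant that every face through x extends to a face whose
  coloured vertices show all of them; since a face has at most n vertices, fewer than n colours are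
  forbidden at x, so x can always be coloured, though possibly like one of its neighbours. A
  monochromatic edge uv is then removed by the stellar subdivision at uv, which keeps K and the
  dimension. The new vertex replaces u or v in every face through it, so it may forbid the colours
  forbidden at u together with the colour of u. Assigning each uncoloured vertex and each
  monochromatic edge a level that drops as more colours are forbidden, both moves decrease the
  multiset of levels, so the process ends with a proper n-colouring.\<close>

lemma simplicial_complex_downward_closed:
  "simplicial_complex \<Delta> \<Longrightarrow> \<sigma> \<in> \<Delta> \<Longrightarrow> \<tau> \<subseteq> \<sigma> \<Longrightarrow> \<tau> \<in> \<Delta>"
  unfolding simplicial_complex_def by blast

lemma finite_vertices: "simplicial_complex \<Delta> \<Longrightarrow> finite (vertices \<Delta>)"
  unfolding simplicial_complex_def vertices_def by blast

lemma face_subset_vertices: "\<sigma> \<in> \<Delta> \<Longrightarrow> \<sigma> \<subseteq> vertices \<Delta>"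
  unfolding vertices_def by blast

lemma singleton_face: "simplicial_complex \<Delta> \<Longrightarrow> x \<in> vertices \<Delta> \<Longrightarrow> {x} \<in> \<Delta>"
  unfolding vertices_def by (auto intro: simplicial_complex_downward_closed)

lemma image_Diff_twin:
  assumes "x \<in> S" "y \<in> S" "x \<noteq> y" "f x = f y"
  shows "f ` (S - {x}) = f ` S"
proof -
  have "f x \<in> f ` (S - {x})"
    using assms by (metis DiffI image_eqI singletonD)
  then show ?thesis
    using assms(1) by (metis image_insert insert_Diff insert_absorb)
qed

lemma ex_less_notin:
  assumes "finite S" "card S < n"
  shows "\<exists>c<n. c \<notin> S"
proof (rule ccontr)
  assume "\<not> (\<exists>c<n. c \<notin> S)"
  then have "{..<n} \<subseteq> S" by blast
  with assms(1) have "card {..<n} \<le> card S"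
    by (rule card_mono)
  with assms(2) show False by simp
qed

lemma card_face_le_dim:
  assumes "simplicial_complex \<Delta>" "\<sigma> \<in> \<Delta>"
  shows "int (card \<sigma>) \<le> dim \<Delta> + 1"
  using assms unfolding dim_def simplicial_complex_def by auto

lemma dim_ge_minus_one:
  assumes "finite \<Delta>"
  shows "-1 \<le> dim \<Delta>"
proof (cases "\<Delta> = {}")
  case False
  then obtain \<sigma> where "\<sigma> \<in> \<Delta>" by blast
  with assms have "int (card \<sigma>) \<le> Max ((\<lambda>F. int (card F)) ` \<Delta>)"
    by (intro Max_ge) auto
  with False show ?thesis
    unfolding dim_def by simp
qed (simp add: dim_def)

lemma dim_le_dim:
  assumes "finite \<Gamma>" "finite \<Delta>" "\<And>\<sigma>. \<sigma> \<in> \<Gamma> \<Longrightarrow> \<exists>\<tau>\<in>\<Delta>. card \<sigma> \<le> card \<tau>"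
  shows "dim \<Gamma> \<le> dim \<Delta>"
proof (cases "\<Gamma> = {}")
  case True
  then show ?thesis
    using dim_ge_minus_one[OF assms(2)] by (simp add: dim_def)
next
  case False
  have "Max ((\<lambda>F. int (card F)) ` \<Gamma>) \<in> (\<lambda>F. int (card F)) ` \<Gamma>"
    using assms(1) False by (intro Max_in) auto
  then obtain \<sigma> where "\<sigma> \<in> \<Gamma>" "Max ((\<lambda>F. int (card F)) ` \<Gamma>) = int (card \<sigma>)"
    by blast
  moreover obtain \<tau> where "\<tau> \<in> \<Delta>" "card \<sigma> \<le> card \<tau>"
    using assms(3)[OF \<open>\<sigma> \<in> \<Gamma>\<close>] by blast
  moreover have "int (card \<tau>) \<le> Max ((\<lambda>F. int (card F)) ` \<Delta>)"
    using assms(2) \<open>\<tau> \<in> \<Delta>\<close> by (intro Max_ge) auto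
  ultimately show ?thesis
    using False unfolding dim_def by auto
qed

lemma mem_stellar_iff:
  "\<sigma> \<in> stellar \<Delta> F a \<longleftrightarrow> (\<sigma> \<in> \<Delta> \<and> \<not> F \<subseteq> \<sigma>) \<or>
     (\<exists>X H G. X \<subseteq> {a} \<and> H \<subset> F \<and> G \<in> link \<Delta> F \<and> \<sigma> = X \<union> H \<union> G)"
  unfolding stellar_def join_def simplex_def boundary_simplex_def by blast

locale stellar_subdivision =
  fixes \<Delta> :: "'a set set" and F :: "'a set" and a :: 'a
  assumes complex: "simplicial_complex \<Delta>"
    and face: "F \<in> \<Delta>"
    and nonempty: "F \<noteq> {}"
    and fresh: "a \<notin> vertices \<Delta>"
begin

lemma fresh_notin_face: "\<sigma> \<in> \<Delta> \<Longrightarrow> a \<notin> \<sigma>"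
  using fresh face_subset_vertices by blast

lemma face_in_stellar: "\<sigma> \<in> \<Delta> \<Longrightarrow> \<not> F \<subseteq> \<sigma> \<Longrightarrow> \<sigma> \<in> stellar \<Delta> F a"
  by (simp add: mem_stellar_iff)

lemma cone_in_stellar:
  assumes "\<tau> \<in> \<Delta>" "F \<subseteq> \<tau>" "x \<in> F"
  shows "insert a (\<tau> - {x}) \<in> stellar \<Delta> F a"
proof -
  have "\<tau> - F \<in> link \<Delta> F"
    using assms simplicial_complex_downward_closed[OF complex] unfolding link_def
    by (auto simp: Un_absorb1)
  moreover have "insert a (\<tau> - {x}) = {a} \<union> (F - {x}) \<union> (\<tau> - F)"
    using assms by blast
  moreover have "F - {x} \<subset> F"
    using assms by blast
  ultimately show ?thesis
    unfolding mem_stellar_iff by blast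
qed

lemma stellar_face_without_fresh:
  assumes "\<sigma> \<in> stellar \<Delta> F a" "a \<notin> \<sigma>"
  shows "\<sigma> \<in> \<Delta> \<and> \<not> F \<subseteq> \<sigma>"
  using assms(1) unfolding mem_stellar_iff
proof (elim disjE exE conjE)
  fix X H G
  assume "X \<subseteq> {a}" "H \<subset> F" "G \<in> link \<Delta> F" "\<sigma> = X \<union> H \<union> G"
  with assms(2) have "\<sigma> = H \<union> G" "\<sigma> \<subseteq> F \<union> G" "F \<union> G \<in> \<Delta>" "F \<inter> G = {}"
    unfolding link_def by auto
  with \<open>H \<subset> F\<close> show ?thesis
    using simplicial_complex_downward_closed[OF complex] by blast
qed simp

lemma stellar_face_with_fresh:
  assumes "\<sigma> \<in> stellar \<Delta> F a" "a \<in> \<sigma>"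
  obtains \<tau> x where "\<tau> \<in> \<Delta>" "F \<subseteq> \<tau>" "x \<in> F" "\<sigma> \<subseteq> insert a (\<tau> - {x})"
proof -
  obtain X H G where "X \<subseteq> {a}" "H \<subset> F" "G \<in> link \<Delta> F" "\<sigma> = X \<union> H \<union> G"
    using assms fresh_notin_face unfolding mem_stellar_iff by blast
  moreover from \<open>H \<subset> F\<close> obtain x where "x \<in> F" "x \<notin> H" by blast
  ultimately show ?thesis
    using that[of "F \<union> G" x] unfolding link_def by blast
qed

lemma vertices_stellar_subset: "vertices (stellar \<Delta> F a) \<subseteq> insert a (vertices \<Delta>)"
proof
  fix v assume "v \<in> vertices (stellar \<Delta> F a)"
  then obtain \<sigma> where \<sigma>: "\<sigma> \<in> stellar \<Delta> F a" "v \<in> \<sigma>"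
    unfolding vertices_def by blast
  show "v \<in> insert a (vertices \<Delta>)"
  proof (cases "a \<in> \<sigma>")
    case True
    with \<sigma> show ?thesis
      by (elim stellar_face_with_fresh) (auto dest: face_subset_vertices)
  next
    case False
    with \<sigma> show ?thesis
      using stellar_face_without_fresh face_subset_vertices by blast
  qed
qed

lemma stellar_subset_Pow: "stellar \<Delta> F a \<subseteq> Pow (insert a (vertices \<Delta>))"
  using face_subset_vertices vertices_stellar_subset by blast

lemma stellar_downward_closed:
  assumes "\<sigma> \<in> stellar \<Delta> F a" "\<tau> \<subseteq> \<sigma>"
  shows "\<tau> \<in> stellar \<Delta> F a"
proof -
  from assms(1) consider "\<sigma> \<in> \<Delta>" "\<not> F \<subseteq> \<sigma>"
    | X H G where "X \<subseteq> {a}" "H \<subset> F" "G \<in> link \<Delta> F" "\<sigma> = X \<union> H \<union> G"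
    unfolding mem_stellar_iff by blast
  then show ?thesis
  proof cases
    case 1
    with assms(2) show ?thesis
      using simplicial_complex_downward_closed[OF complex] face_in_stellar by blast
  next
    case (2 X H G)
    then have "G \<in> \<Delta>" "F \<inter> G = {}" "F \<union> G \<in> \<Delta>"
      unfolding link_def by auto
    moreover have "\<tau> \<inter> G \<in> \<Delta>"
      by (rule simplicial_complex_downward_closed[OF complex \<open>G \<in> \<Delta>\<close>]) blast
    moreover have "F \<union> (\<tau> \<inter> G) \<in> \<Delta>"
      by (rule simplicial_complex_downward_closed[OF complex \<open>F \<union> G \<in> \<Delta>\<close>]) blast
    ultimately have "\<tau> \<inter> G \<in> link \<Delta> F"
      unfolding link_def by blast
    moreover have "\<tau> = (\<tau> \<inter> X) \<union> (\<tau> \<inter> H) \<union> (\<tau> \<inter> G)"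
      using assms(2) \<open>\<sigma> = X \<union> H \<union> G\<close> by blast
    ultimately show ?thesis
      using \<open>X \<subseteq> {a}\<close> \<open>H \<subset> F\<close> unfolding mem_stellar_iff
      by (intro disjI2 exI[of _ "\<tau> \<inter> X"] exI[of _ "\<tau> \<inter> H"] exI[of _ "\<tau> \<inter> G"]) auto
  qed
qed

lemma simplicial_complex_stellar: "simplicial_complex (stellar \<Delta> F a)"
proof -
  have fin: "finite (insert a (vertices \<Delta>))"
    using finite_vertices[OF complex] by simp
  then have "finite (stellar \<Delta> F a)"
    by (intro finite_subset[OF stellar_subset_Pow]) simp
  moreover have "finite \<sigma>" if "\<sigma> \<in> stellar \<Delta> F a" for \<sigma>
    using that stellar_subset_Pow fin by (blast intro: finite_subset)
  ultimately show ?thesis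
    unfolding simplicial_complex_def using stellar_downward_closed by blast
qed

lemma card_cone:
  assumes "\<tau> \<in> \<Delta>" "x \<in> \<tau>"
  shows "card (insert a (\<tau> - {x})) = card \<tau>"
proof -
  have "finite \<tau>"
    using assms(1) complex unfolding simplicial_complex_def by blast
  then have "Suc (card (\<tau> - {x})) = card \<tau>"
    using assms(2) by (rule card_Suc_Diff1)
  with \<open>finite \<tau>\<close> show ?thesis
    using fresh_notin_face[OF assms(1)] by simp
qed

lemma card_stellar_face:
  assumes "\<sigma> \<in> stellar \<Delta> F a"
  shows "\<exists>\<tau>\<in>\<Delta>. card \<sigma> \<le> card \<tau>"
proof (cases "a \<in> \<sigma>")
  case True
  with assms obtain \<tau> x where "\<tau> \<in> \<Delta>" "F \<subseteq> \<tau>" "x \<in> F" "\<sigma> \<subseteq> insert a (\<tau> - {x})"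
    by (rule stellar_face_with_fresh)
  moreover have "finite (insert a (\<tau> - {x}))"
    using \<open>\<tau> \<in> \<Delta>\<close> complex unfolding simplicial_complex_def by blast
  ultimately have "card \<sigma> \<le> card (insert a (\<tau> - {x}))"
    by (intro card_mono)
  also have "\<dots> = card \<tau>"
    using \<open>\<tau> \<in> \<Delta>\<close> \<open>F \<subseteq> \<tau>\<close> \<open>x \<in> F\<close> by (intro card_cone) auto
  finally show ?thesis
    using \<open>\<tau> \<in> \<Delta>\<close> ..
next
  case False
  with assms show ?thesis
    using stellar_face_without_fresh by blast
qed

lemma card_face_in_stellar:
  assumes "\<tau> \<in> \<Delta>"
  shows "\<exists>\<sigma>\<in>stellar \<Delta> F a. card \<tau> \<le> card \<sigma>"
proof (cases "F \<subseteq> \<tau>")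
  case True
  obtain x where "x \<in> F" using nonempty by blast
  with assms True have "insert a (\<tau> - {x}) \<in> stellar \<Delta> F a" "card (insert a (\<tau> - {x})) = card \<tau>"
    using cone_in_stellar card_cone by (blast, blast)
  then show ?thesis by (metis order_refl)
next
  case False
  with assms show ?thesis
    using face_in_stellar by blast
qed

lemma dim_stellar: "dim (stellar \<Delta> F a) = dim \<Delta>"
proof -
  have "finite (stellar \<Delta> F a)" "finite \<Delta>"
    using simplicial_complex_stellar complex unfolding simplicial_complex_def by blast+
  then show ?thesis
    using card_stellar_face card_face_in_stellar by (intro antisym dim_le_dim)
qed

lemma vertices_stellar:
  assumes "\<And>v. F \<noteq> {v}"
  shows "vertices (stellar \<Delta> F a) = insert a (vertices \<Delta>)"
proof (intro equalityI vertices_stellar_subset insert_subsetI subsetI)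
  obtain x where "x \<in> F" using nonempty by blast
  then have "insert a (F - {x}) \<in> stellar \<Delta> F a"
    using cone_in_stellar face by blast
  then show "a \<in> vertices (stellar \<Delta> F a)"
    unfolding vertices_def by blast
next
  fix v assume "v \<in> vertices \<Delta>"
  then have "{v} \<in> \<Delta>"
    by (rule singleton_face[OF complex])
  moreover have "\<not> F \<subseteq> {v}"
    using assms nonempty by blast
  ultimately show "v \<in> vertices (stellar \<Delta> F a)"
    using face_in_stellar unfolding vertices_def by blast
qed

lemma subcomplex_stellar:
  assumes "simplicial_complex K" "K \<subseteq> \<Delta>" "F \<notin> K"
  shows "K \<subseteq> stellar \<Delta> F a"
proof
  fix \<sigma> assume "\<sigma> \<in> K"
  then have "\<not> F \<subseteq> \<sigma>"
    using assms(1,3) simplicial_complex_downward_closed by blast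
  with \<open>\<sigma> \<in> K\<close> assms(2) show "\<sigma> \<in> stellar \<Delta> F a"
    using face_in_stellar by blast
qed

lemma stellar_face_cover:
  assumes "\<sigma> \<in> stellar \<Delta> F a"
  obtains \<tau> where "\<tau> \<in> \<Delta>" "\<sigma> - {a} \<subseteq> \<tau>" "a \<in> \<sigma> \<Longrightarrow> F \<subseteq> \<tau>"
    and "\<And>\<sigma>'. \<sigma>' \<in> \<Delta> \<Longrightarrow> \<tau> \<subseteq> \<sigma>' \<Longrightarrow> \<exists>\<sigma>''\<in>stellar \<Delta> F a. \<sigma> \<subseteq> \<sigma>'' \<and>
           (\<sigma>'' = \<sigma>' \<or> F \<subseteq> \<sigma>' \<and> (\<exists>x\<in>F. \<sigma>'' = insert a (\<sigma>' - {x})))"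
proof (cases "a \<in> \<sigma>")
  case True
  with assms obtain \<tau> x where \<tau>: "\<tau> \<in> \<Delta>" "F \<subseteq> \<tau>" "x \<in> F" "\<sigma> \<subseteq> insert a (\<tau> - {x})"
    by (rule stellar_face_with_fresh)
  show ?thesis
  proof (rule that[OF \<tau>(1)])
    fix \<sigma>' assume "\<sigma>' \<in> \<Delta>" "\<tau> \<subseteq> \<sigma>'"
    with \<tau> show "\<exists>\<sigma>''\<in>stellar \<Delta> F a. \<sigma> \<subseteq> \<sigma>'' \<and>
        (\<sigma>'' = \<sigma>' \<or> F \<subseteq> \<sigma>' \<and> (\<exists>x\<in>F. \<sigma>'' = insert a (\<sigma>' - {x})))"
      by (intro bexI[OF _ cone_in_stellar[of \<sigma>' x]]) auto
  qed (use \<tau> in auto)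
next
  case False
  with assms have \<sigma>: "\<sigma> \<in> \<Delta>" "\<not> F \<subseteq> \<sigma>"
    using stellar_face_without_fresh by blast+
  show ?thesis
  proof (rule that[OF \<sigma>(1)])
    fix \<sigma>' assume \<sigma>': "\<sigma>' \<in> \<Delta>" "\<sigma> \<subseteq> \<sigma>'"
    show "\<exists>\<sigma>''\<in>stellar \<Delta> F a. \<sigma> \<subseteq> \<sigma>'' \<and>
        (\<sigma>'' = \<sigma>' \<or> F \<subseteq> \<sigma>' \<and> (\<exists>x\<in>F. \<sigma>'' = insert a (\<sigma>' - {x})))"
    proof (cases "F \<subseteq> \<sigma>'")
      case True
      from \<sigma>(2) obtain x where "x \<in> F" "x \<notin> \<sigma>" by blast
      with True \<sigma>' show ?thesis
        by (intro bexI[OF _ cone_in_stellar[of \<sigma>' x]]) auto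
    next
      case False
      with \<sigma>' show ?thesis
        using face_in_stellar by blast
    qed
  qed (use False in auto)
qed

end

definition monochromatic_edges :: "'a set set \<Rightarrow> 'a set \<Rightarrow> ('a \<Rightarrow> nat) \<Rightarrow> 'a set set" where
  "monochromatic_edges \<Delta> C \<kappa> =
     {{u, v} | u v. {u, v} \<in> \<Delta> \<and> u \<noteq> v \<and> u \<in> C \<and> v \<in> C \<and> \<kappa> u = \<kappa> v}"

lemma monochromatic_edges_subset: "monochromatic_edges \<Delta> C \<kappa> \<subseteq> \<Delta>"
  unfolding monochromatic_edges_def by blast

lemma finite_monochromatic_edges:
  "simplicial_complex \<Delta> \<Longrightarrow> finite (monochromatic_edges \<Delta> C \<kappa>)"
  unfolding simplicial_complex_def using finite_subset[OF monochromatic_edges_subset] by blast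

lemma monochromatic_edges_recolor:
  assumes "u \<notin> C"
  shows "{e \<in> monochromatic_edges \<Delta> (insert u C) (\<kappa>(u := c)). u \<notin> e} = monochromatic_edges \<Delta> C \<kappa>"
  using assms unfolding monochromatic_edges_def by auto

text \<open>Colouring u trades the level of u for the
  smaller levels of the new monochromatic edges through u; subdividing an edge uv, with u of
  minimal level, trades the level of the edge for that of the new vertex, which forbids one colour
  more than u.\<close>

definition vertex_level :: "nat \<Rightarrow> ('a \<Rightarrow> nat set) \<Rightarrow> 'a \<Rightarrow> nat" where
  "vertex_level n forbidden x = 2 * (n - card (forbidden x))"

definition edge_level :: "nat \<Rightarrow> ('a \<Rightarrow> nat set) \<Rightarrow> 'a set \<Rightarrow> nat" where
  "edge_level n forbidden e = Min (vertex_level n forbidden ` e) - 1"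

definition potential ::
  "nat \<Rightarrow> 'a set set \<Rightarrow> 'a set \<Rightarrow> ('a \<Rightarrow> nat) \<Rightarrow> ('a \<Rightarrow> nat set) \<Rightarrow> nat multiset" where
  "potential n \<Delta> C \<kappa> forbidden =
     image_mset (vertex_level n forbidden) (mset_set (vertices \<Delta> - C)) +
     image_mset (edge_level n forbidden) (mset_set (monochromatic_edges \<Delta> C \<kappa>))"

lemma edge_level_less:
  assumes "finite e" "x \<in> e" "0 < vertex_level n forbidden x"
  shows "edge_level n forbidden e < vertex_level n forbidden x"
proof -
  have "Min (vertex_level n forbidden ` e) \<le> vertex_level n forbidden x"
    using assms(1,2) by (intro Min_le) auto
  with assms(3) show ?thesis
    unfolding edge_level_def by linarith
qed

lemma vertex_level_update_other:
  "x \<noteq> a \<Longrightarrow> vertex_level n (forbidden(a := S)) x = vertex_level n forbidden x"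
  unfolding vertex_level_def by simp

lemma edge_level_update_other:
  assumes "a \<notin> e"
  shows "edge_level n (forbidden(a := S)) e = edge_level n forbidden e"
proof -
  have "vertex_level n (forbidden(a := S)) ` e = vertex_level n forbidden ` e"
    by (intro image_cong refl vertex_level_update_other) (use assms in blast)
  then show ?thesis
    unfolding edge_level_def by simp
qed

lemma edge_level_pair:
  "edge_level n forbidden {u, v} = min (vertex_level n forbidden u) (vertex_level n forbidden v) - 1"
  unfolding edge_level_def by simp

text \<open>A state of the greedy colouring; \<open>C\<close> is the set of vertices coloured so far.\<close>

locale admissible =
  fixes n :: nat and K M :: "'a set set" and C :: "'a set"
    and \<kappa> :: "'a \<Rightarrow> nat" and forbidden :: "'a \<Rightarrow> nat set"
  assumes complex: "simplicial_complex M"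
    and subcomplex: "simplicial_complex K" "K \<subseteq> M"
    and dim_eq: "int n = dim M + 1"
    and colored_vertices: "vertices K \<subseteq> C" "C \<subseteq> vertices M"
    and color_less: "x \<in> C \<Longrightarrow> \<kappa> x < n"
    and color_not_forbidden: "x \<in> C \<Longrightarrow> \<kappa> x \<notin> forbidden x"
    and proper_on_K: "{u, v} \<in> K \<Longrightarrow> u \<noteq> v \<Longrightarrow> \<kappa> u \<noteq> \<kappa> v"
    and forbidden_realized:
      "x \<in> \<sigma> \<Longrightarrow> \<sigma> \<in> M \<Longrightarrow> \<exists>\<sigma>'\<in>M. \<sigma> \<subseteq> \<sigma>' \<and> forbidden x \<subseteq> \<kappa> ` (\<sigma>' \<inter> C)"
begin

lemma card_forbidden_less:
  assumes "x \<in> vertices M"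
  shows "finite (forbidden x)" "card (forbidden x) < n"
proof -
  obtain \<sigma> where \<sigma>: "\<sigma> \<in> M" "x \<in> \<sigma>" "forbidden x \<subseteq> \<kappa> ` (\<sigma> \<inter> C)"
    using forbidden_realized[OF insertI1 singleton_face[OF complex assms]] by auto
  have "finite \<sigma>"
    using \<sigma>(1) complex unfolding simplicial_complex_def by blast
  have sub: "forbidden x \<subseteq> \<kappa> ` ((\<sigma> - {x}) \<inter> C)"
  proof
    fix c assume "c \<in> forbidden x"
    with \<sigma>(3) obtain y where "y \<in> \<sigma> \<inter> C" "c = \<kappa> y" by blast
    moreover from \<open>c \<in> forbidden x\<close> have "y \<noteq> x"
      using color_not_forbidden \<open>y \<in> \<sigma> \<inter> C\<close> \<open>c = \<kappa> y\<close> by blast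
    ultimately show "c \<in> \<kappa> ` ((\<sigma> - {x}) \<inter> C)" by blast
  qed
  have less: "card (\<kappa> ` ((\<sigma> - {x}) \<inter> C)) < n"
  proof -
    have "card (\<kappa> ` ((\<sigma> - {x}) \<inter> C)) \<le> card (\<sigma> - {x})"
      using \<open>finite \<sigma>\<close> card_image_le[of "(\<sigma> - {x}) \<inter> C" \<kappa>]
        card_mono[of "\<sigma> - {x}" "(\<sigma> - {x}) \<inter> C"] by simp
    also have "\<dots> < card \<sigma>"
      using \<open>finite \<sigma>\<close> \<sigma>(2) by (rule card_Diff1_less)
    also have "int (card \<sigma>) \<le> int n"
      using card_face_le_dim[OF complex \<sigma>(1)] dim_eq by simp
    finally show ?thesis by simp
  qed
  have fin: "finite (\<kappa> ` ((\<sigma> - {x}) \<inter> C))"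
    using \<open>finite \<sigma>\<close> by simp
  show "finite (forbidden x)"
    using sub fin by (rule finite_subset)
  show "card (forbidden x) < n"
    using card_mono[OF fin sub] less by linarith
qed

lemma admissible_recolor:
  assumes "u \<in> vertices M" "u \<notin> C" "c < n" "c \<notin> forbidden u"
  shows "admissible n K M (insert u C) (\<kappa>(u := c)) forbidden"
proof unfold_locales
  have agree: "(\<kappa>(u := c)) y = \<kappa> y" if "y \<in> C" for y
    using that assms(2) by auto
  show "simplicial_complex M" "simplicial_complex K" "K \<subseteq> M" "int n = dim M + 1"
    using complex subcomplex dim_eq by simp_all
  show "vertices K \<subseteq> insert u C" "insert u C \<subseteq> vertices M"
    using colored_vertices assms(1) by blast+
  fix x
  show "x \<in> insert u C \<Longrightarrow> (\<kappa>(u := c)) x < n"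
    using color_less assms(3) agree by auto
  show "x \<in> insert u C \<Longrightarrow> (\<kappa>(u := c)) x \<notin> forbidden x"
    using color_not_forbidden assms(4) agree by auto
  show "(\<kappa>(u := c)) x \<noteq> (\<kappa>(u := c)) y" if "{x, y} \<in> K" "x \<noteq> y" for y
  proof -
    have "x \<in> C" "y \<in> C"
      using that(1) colored_vertices(1) unfolding vertices_def by blast+
    then show ?thesis
      using proper_on_K[OF that] agree by simp
  qed
  fix \<sigma> assume "x \<in> \<sigma>" "\<sigma> \<in> M"
  then obtain \<sigma>' where "\<sigma>' \<in> M" "\<sigma> \<subseteq> \<sigma>'" "forbidden x \<subseteq> \<kappa> ` (\<sigma>' \<inter> C)"
    by (auto dest: forbidden_realized)
  moreover have "\<kappa> ` (\<sigma>' \<inter> C) \<subseteq> \<kappa>(u := c) ` (\<sigma>' \<inter> insert u C)"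
  proof
    fix d assume "d \<in> \<kappa> ` (\<sigma>' \<inter> C)"
    then obtain y where "y \<in> \<sigma>' \<inter> C" "d = \<kappa> y" by blast
    then show "d \<in> \<kappa>(u := c) ` (\<sigma>' \<inter> insert u C)"
      using agree[of y] by (metis IntD1 IntD2 IntI image_eqI insertI2)
  qed
  ultimately show "\<exists>\<sigma>'\<in>M. \<sigma> \<subseteq> \<sigma>' \<and> forbidden x \<subseteq> \<kappa>(u := c) ` (\<sigma>' \<inter> insert u C)"
    by blast
qed

lemma potential_recolor_less:
  assumes "u \<in> vertices M" "u \<notin> C"
  shows "(potential n M (insert u C) (\<kappa>(u := c)) forbidden, potential n M C \<kappa> forbidden)
           \<in> mult less_than"
proof -
  define N where "N = {e \<in> monochromatic_edges M (insert u C) (\<kappa>(u := c)). u \<in> e}"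
  define R where "R = image_mset (vertex_level n forbidden) (mset_set (vertices M - insert u C)) +
    image_mset (edge_level n forbidden) (mset_set (monochromatic_edges M C \<kappa>))"
  have "vertices M - C = insert u (vertices M - insert u C)"
    using assms by blast
  also have "mset_set \<dots> = add_mset u (mset_set (vertices M - insert u C))"
    using finite_vertices[OF complex] by (intro mset_set.insert) auto
  finally have old: "potential n M C \<kappa> forbidden = R + {#vertex_level n forbidden u#}"
    unfolding potential_def R_def by (simp only:) simp
  have "mset_set (monochromatic_edges M (insert u C) (\<kappa>(u := c))) =
      mset_set (monochromatic_edges M C \<kappa>) + mset_set N"
    using finite_monochromatic_edges[OF complex, of "insert u C" "\<kappa>(u := c)"]
    unfolding N_def
    by (subst multiset_partition[where P = "\<lambda>e. u \<notin> e"])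
      (simp add: monochromatic_edges_recolor[OF assms(2)])
  then have new: "potential n M (insert u C) (\<kappa>(u := c)) forbidden =
      R + image_mset (edge_level n forbidden) (mset_set N)"
    unfolding potential_def R_def by simp
  have "0 < vertex_level n forbidden u"
    using card_forbidden_less[OF assms(1)] unfolding vertex_level_def by simp
  moreover have "finite e" "u \<in> e" if "e \<in> N" for e
    using that monochromatic_edges_subset complex unfolding N_def simplicial_complex_def by blast+
  ultimately have "edge_level n forbidden e < vertex_level n forbidden u" if "e \<in> N" for e
    using that by (blast intro: edge_level_less)
  moreover have "finite N"
    using finite_monochromatic_edges[OF complex] unfolding N_def by simp
  ultimately show ?thesis
    unfolding old new by (intro one_step_implies_mult) auto
qed

lemma color_uncolored_vertex:
  assumes "u \<in> vertices M" "u \<notin> C"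
  obtains c where "admissible n K M (insert u C) (\<kappa>(u := c)) forbidden"
    "(potential n M (insert u C) (\<kappa>(u := c)) forbidden, potential n M C \<kappa> forbidden) \<in> mult less_than"
proof -
  obtain c where "c < n" "c \<notin> forbidden u"
    using ex_less_notin card_forbidden_less[OF assms(1)] by blast
  with assms show thesis
    using that admissible_recolor potential_recolor_less by blast
qed

end

locale edge_split = admissible n K M C \<kappa> forbidden + stellar_subdivision M "{u, v}" a
  for n K M C \<kappa> forbidden u v a +
  assumes distinct: "u \<noteq> v"
    and endpoints_colored: "u \<in> C" "v \<in> C"
    and same_color: "\<kappa> u = \<kappa> v"
begin

lemma fresh_uncolored: "a \<notin> C"
  using fresh colored_vertices(2) by blast

lemma vertices_stellar_edge: "vertices (stellar M {u, v} a) = insert a (vertices M)"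
  using distinct by (intro vertices_stellar) auto

lemma monochromatic_edges_stellar:
  "monochromatic_edges (stellar M {u, v} a) C \<kappa> = monochromatic_edges M C \<kappa> - {{u, v}}"
proof (intro equalityI subsetI)
  fix e assume "e \<in> monochromatic_edges (stellar M {u, v} a) C \<kappa>"
  then obtain x y where e: "e = {x, y}" "e \<in> stellar M {u, v} a" "x \<noteq> y" "x \<in> C" "y \<in> C" "\<kappa> x = \<kappa> y"
    unfolding monochromatic_edges_def by blast
  then have "a \<notin> e"
    using fresh_uncolored by blast
  with e(2) have "e \<in> M" "\<not> {u, v} \<subseteq> e"
    using stellar_face_without_fresh by blast+
  with e show "e \<in> monochromatic_edges M C \<kappa> - {{u, v}}"
    unfolding monochromatic_edges_def by blast
next
  fix e assume "e \<in> monochromatic_edges M C \<kappa> - {{u, v}}"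
  then obtain x y where e: "e = {x, y}" "e \<in> M" "e \<noteq> {u, v}" "x \<noteq> y" "x \<in> C" "y \<in> C" "\<kappa> x = \<kappa> y"
    unfolding monochromatic_edges_def by blast
  moreover have "\<not> {u, v} \<subseteq> e"
    using e(1,3) distinct by (auto simp: doubleton_eq_iff)
  ultimately show "e \<in> monochromatic_edges (stellar M {u, v} a) C \<kappa>"
    using face_in_stellar unfolding monochromatic_edges_def by blast
qed

lemma edge_notin_K: "{u, v} \<notin> K"
  using proper_on_K distinct same_color by blast

lemma colors_in_cone:
  assumes "{u, v} \<subseteq> \<sigma>'" "w \<in> {u, v}"
  shows "\<kappa> ` (\<sigma>' \<inter> C) \<subseteq> \<kappa> ` (insert a (\<sigma>' - {w}) \<inter> C)"
proof -
  have "\<kappa> ` (\<sigma>' \<inter> C) = \<kappa> ` ((\<sigma>' \<inter> C) - {w})"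
  proof (cases "w = u")
    case True
    then show ?thesis
      using assms endpoints_colored distinct same_color by (intro image_Diff_twin[symmetric, of _ _ v]) auto
  next
    case False
    with assms(2) have "w = v" by blast
    then show ?thesis
      using assms endpoints_colored distinct same_color by (intro image_Diff_twin[symmetric, of _ _ u]) auto
  qed
  also have "\<dots> \<subseteq> \<kappa> ` (insert a (\<sigma>' - {w}) \<inter> C)"
    by (intro image_mono) blast
  finally show ?thesis .
qed

lemma forbidden_realized_stellar:
  assumes "x \<in> \<sigma>" "\<sigma> \<in> stellar M {u, v} a"
  shows "\<exists>\<sigma>''\<in>stellar M {u, v} a. \<sigma> \<subseteq> \<sigma>'' \<and>
           (forbidden(a := insert (\<kappa> u) (forbidden u))) x \<subseteq> \<kappa> ` (\<sigma>'' \<inter> C)"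
    (is "\<exists>\<sigma>''\<in>_. _ \<and> ?forbidden' x \<subseteq> _")
proof -
  from assms(2) obtain \<tau> where \<tau>: "\<tau> \<in> M" "\<sigma> - {a} \<subseteq> \<tau>" "a \<in> \<sigma> \<Longrightarrow> {u, v} \<subseteq> \<tau>"
    and lift: "\<And>\<sigma>'. \<sigma>' \<in> M \<Longrightarrow> \<tau> \<subseteq> \<sigma>' \<Longrightarrow> \<exists>\<sigma>''\<in>stellar M {u, v} a. \<sigma> \<subseteq> \<sigma>'' \<and>
       (\<sigma>'' = \<sigma>' \<or> {u, v} \<subseteq> \<sigma>' \<and> (\<exists>w\<in>{u, v}. \<sigma>'' = insert a (\<sigma>' - {w})))"
    by (rule stellar_face_cover) blast
  obtain \<sigma>' where \<sigma>': "\<sigma>' \<in> M" "\<tau> \<subseteq> \<sigma>'" "?forbidden' x \<subseteq> \<kappa> ` (\<sigma>' \<inter> C)"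
  proof (cases "x = a")
    case True
    with assms(1) \<tau>(3) have "u \<in> \<tau>" by blast
    with \<tau>(1) obtain \<sigma>' where "\<sigma>' \<in> M" "\<tau> \<subseteq> \<sigma>'" "forbidden u \<subseteq> \<kappa> ` (\<sigma>' \<inter> C)"
      by (auto dest: forbidden_realized)
    moreover have "\<kappa> u \<in> \<kappa> ` (\<sigma>' \<inter> C)"
      using \<open>u \<in> \<tau>\<close> \<open>\<tau> \<subseteq> \<sigma>'\<close> endpoints_colored by blast
    ultimately show thesis
      using that True by simp
  next
    case False
    with assms(1) \<tau>(2) have "x \<in> \<tau>" by blast
    with \<tau>(1) obtain \<sigma>' where "\<sigma>' \<in> M" "\<tau> \<subseteq> \<sigma>'" "forbidden x \<subseteq> \<kappa> ` (\<sigma>' \<inter> C)"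
      by (auto dest: forbidden_realized)
    then show thesis
      using that False by simp
  qed
  from lift[OF \<sigma>'(1,2)] obtain \<sigma>'' where \<sigma>'': "\<sigma>'' \<in> stellar M {u, v} a" "\<sigma> \<subseteq> \<sigma>''"
    and "\<sigma>'' = \<sigma>' \<or> {u, v} \<subseteq> \<sigma>' \<and> (\<exists>w\<in>{u, v}. \<sigma>'' = insert a (\<sigma>' - {w}))"
    by blast
  then have "\<kappa> ` (\<sigma>' \<inter> C) \<subseteq> \<kappa> ` (\<sigma>'' \<inter> C)"
    using colors_in_cone by blast
  with \<sigma>'(3) have "?forbidden' x \<subseteq> \<kappa> ` (\<sigma>'' \<inter> C)"
    by (rule subset_trans)
  with \<sigma>'' show ?thesis
    by blast
qed

lemma admissible_stellar:
  "admissible n K (stellar M {u, v} a) C \<kappa> (forbidden(a := insert (\<kappa> u) (forbidden u)))"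
proof unfold_locales
  show "simplicial_complex (stellar M {u, v} a)"
    by (rule simplicial_complex_stellar)
  show "simplicial_complex K"
    by (fact subcomplex(1))
  show "K \<subseteq> stellar M {u, v} a"
    using subcomplex edge_notin_K by (rule subcomplex_stellar)
  show "int n = dim (stellar M {u, v} a) + 1"
    using dim_eq dim_stellar by simp
  show "vertices K \<subseteq> C" "C \<subseteq> vertices (stellar M {u, v} a)"
    using colored_vertices vertices_stellar_edge by auto
  fix x y \<sigma>
  show "x \<in> C \<Longrightarrow> \<kappa> x < n"
    by (rule color_less)
  show "x \<in> C \<Longrightarrow> \<kappa> x \<notin> (forbidden(a := insert (\<kappa> u) (forbidden u))) x"
    using color_not_forbidden fresh_uncolored by auto
  show "{x, y} \<in> K \<Longrightarrow> x \<noteq> y \<Longrightarrow> \<kappa> x \<noteq> \<kappa> y"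
    by (rule proper_on_K)
  show "x \<in> \<sigma> \<Longrightarrow> \<sigma> \<in> stellar M {u, v} a \<Longrightarrow> \<exists>\<sigma>''\<in>stellar M {u, v} a. \<sigma> \<subseteq> \<sigma>'' \<and>
      (forbidden(a := insert (\<kappa> u) (forbidden u))) x \<subseteq> \<kappa> ` (\<sigma>'' \<inter> C)"
    by (rule forbidden_realized_stellar)
qed

lemma potential_stellar_less:
  assumes "vertex_level n forbidden u \<le> vertex_level n forbidden v"
  shows "(potential n (stellar M {u, v} a) C \<kappa> (forbidden(a := insert (\<kappa> u) (forbidden u))),
          potential n M C \<kappa> forbidden) \<in> mult less_than"
    (is "(potential _ _ _ _ ?forbidden', _) \<in> _")
proof -
  define R where "R = image_mset (vertex_level n forbidden) (mset_set (vertices M - C)) +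
    image_mset (edge_level n forbidden) (mset_set (monochromatic_edges M C \<kappa> - {{u, v}}))"
  have "{u, v} \<in> monochromatic_edges M C \<kappa>"
    using face distinct endpoints_colored same_color unfolding monochromatic_edges_def by blast
  then have "mset_set (monochromatic_edges M C \<kappa>) =
      add_mset {u, v} (mset_set (monochromatic_edges M C \<kappa> - {{u, v}}))"
    using finite_monochromatic_edges[OF complex] by (rule mset_set.remove[rotated])
  then have old: "potential n M C \<kappa> forbidden = R + {#edge_level n forbidden {u, v}#}"
    unfolding potential_def R_def by (simp only:) simp
  have "image_mset (vertex_level n ?forbidden') (mset_set (vertices M - C)) =
      image_mset (vertex_level n forbidden) (mset_set (vertices M - C))"
    by (intro image_mset_cong vertex_level_update_other) (use finite_vertices[OF complex] fresh in auto)
  moreover have "image_mset (edge_level n ?forbidden') (mset_set (monochromatic_edges M C \<kappa> - {{u, v}})) =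
      image_mset (edge_level n forbidden) (mset_set (monochromatic_edges M C \<kappa> - {{u, v}}))"
  proof (intro image_mset_cong edge_level_update_other)
    fix e assume "e \<in># mset_set (monochromatic_edges M C \<kappa> - {{u, v}})"
    then have "e \<in> M"
      using finite_monochromatic_edges[OF complex] monochromatic_edges_subset[of M C \<kappa>] by auto
    then show "a \<notin> e"
      by (rule fresh_notin_face)
  qed
  moreover have "vertices (stellar M {u, v} a) - C = insert a (vertices M - C)"
    using vertices_stellar_edge fresh_uncolored by blast
  moreover have "mset_set (insert a (vertices M - C)) = add_mset a (mset_set (vertices M - C))"
    using finite_vertices[OF complex] fresh by (intro mset_set.insert) auto
  ultimately have new: "potential n (stellar M {u, v} a) C \<kappa> ?forbidden' = R + {#vertex_level n ?forbidden' a#}"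
    unfolding potential_def R_def monochromatic_edges_stellar by simp
  have "u \<in> vertices M"
    using face face_subset_vertices by blast
  then have "finite (forbidden u)" "card (forbidden u) < n"
    by (rule card_forbidden_less)+
  moreover have "\<kappa> u \<notin> forbidden u"
    using color_not_forbidden endpoints_colored by blast
  ultimately have "vertex_level n ?forbidden' a < edge_level n forbidden {u, v}"
    using assms unfolding edge_level_pair vertex_level_def by simp
  then show ?thesis
    unfolding old new by (intro one_step_implies_mult) auto
qed

end

context admissible begin

lemma subdivide_monochromatic_edge:
  assumes "infinite (UNIV :: 'a set)" "e \<in> monochromatic_edges M C \<kappa>"
  obtains M' forbidden' where "stellar_step M M'" "admissible n K M' C \<kappa> forbidden'"
    "(potential n M' C \<kappa> forbidden', potential n M C \<kappa> forbidden) \<in> mult less_than"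
proof -
  obtain u v where uv: "e = {u, v}" "e \<in> M" "u \<noteq> v" "u \<in> C" "v \<in> C" "\<kappa> u = \<kappa> v"
    "vertex_level n forbidden u \<le> vertex_level n forbidden v"
  proof -
    from assms(2) obtain x y where xy: "e = {x, y}" "e \<in> M" "x \<noteq> y" "x \<in> C" "y \<in> C" "\<kappa> x = \<kappa> y"
      unfolding monochromatic_edges_def by blast
    show thesis
    proof (cases "vertex_level n forbidden x \<le> vertex_level n forbidden y")
      case True
      with xy show thesis by (intro that[of x y])
    next
      case False
      moreover have "e = {y, x}"
        using xy(1) by blast
      ultimately show thesis
        using xy by (intro that[of y x]) auto
    qed
  qed
  obtain a where a: "a \<notin> vertices M"
    using ex_new_if_finite[OF assms(1) finite_vertices[OF complex]] by blast
  interpret edge_split n K M C \<kappa> forbidden u v a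
    by (intro edge_split.intro admissible_axioms stellar_subdivision.intro edge_split_axioms.intro)
      (use uv a complex in auto)
  show thesis
  proof (rule that)
    show "stellar_step M (stellar M {u, v} a)"
      unfolding stellar_step_def using uv a by blast
  qed (use admissible_stellar potential_stellar_less[OF uv(7)] uv(1) in auto)
qed

lemma proper_coloring_if_no_monochromatic_edges:
  assumes "vertices M \<subseteq> C" "monochromatic_edges M C \<kappa> = {}"
  shows "proper_coloring M (nat (dim M + 1)) \<kappa>"
  unfolding proper_coloring_def
proof (intro conjI ballI allI impI)
  fix x assume "x \<in> vertices M"
  then show "\<kappa> x < nat (dim M + 1)"
    using assms(1) color_less dim_eq by force
next
  fix x y assume "{x, y} \<in> M \<and> x \<noteq> y"
  moreover have "x \<in> C" "y \<in> C"
    using calculation assms(1) unfolding vertices_def by blast+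
  ultimately show "\<kappa> x \<noteq> \<kappa> y"
    using assms(2) unfolding monochromatic_edges_def by blast
qed

end

lemma admissible_balanced_subdivision:
  fixes M :: "'a set set"
  assumes "infinite (UNIV :: 'a set)" "admissible n K M C \<kappa> forbidden"
  shows "\<exists>M' \<kappa>'. stellar_step\<^sup>*\<^sup>* M M' \<and> K \<subseteq> M' \<and> proper_coloring M' (nat (dim M' + 1)) \<kappa>' \<and>
           (\<forall>x\<in>C. \<kappa>' x = \<kappa> x)"
  using assms(2)
proof (induction "potential n M C \<kappa> forbidden" arbitrary: M C \<kappa> forbidden
    rule: wf_induct_rule[OF wf_mult[OF wf_less_than]])
  case (1 M C \<kappa> forbidden)
  interpret admissible n K M C \<kappa> forbidden by (fact "1.prems")
  consider u where "u \<in> vertices M" "u \<notin> C"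
    | e where "e \<in> monochromatic_edges M C \<kappa>"
    | "vertices M \<subseteq> C" "monochromatic_edges M C \<kappa> = {}"
    by blast
  then show ?case
  proof cases
    case (1 u)
    then obtain c where adm: "admissible n K M (insert u C) (\<kappa>(u := c)) forbidden"
      and less: "(potential n M (insert u C) (\<kappa>(u := c)) forbidden, potential n M C \<kappa> forbidden)
        \<in> mult less_than"
      by (rule color_uncolored_vertex)
    from "1.hyps"[OF less adm] obtain M' \<kappa>' where
      "stellar_step\<^sup>*\<^sup>* M M'" "K \<subseteq> M'" "proper_coloring M' (nat (dim M' + 1)) \<kappa>'"
      "\<forall>x\<in>insert u C. \<kappa>' x = (\<kappa>(u := c)) x"
      by blast
    with 1(2) show ?thesis
      by (intro exI[of _ M'] exI[of _ \<kappa>']) auto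
  next
    case (2 e)
    obtain M' forbidden' where step: "stellar_step M M'"
      and adm: "admissible n K M' C \<kappa> forbidden'"
      and less: "(potential n M' C \<kappa> forbidden', potential n M C \<kappa> forbidden) \<in> mult less_than"
      by (rule subdivide_monochromatic_edge[OF assms(1) 2])
    from "1.hyps"[OF less adm] obtain M'' \<kappa>' where "stellar_step\<^sup>*\<^sup>* M' M''" "K \<subseteq> M''"
      "proper_coloring M'' (nat (dim M'' + 1)) \<kappa>'" "\<forall>x\<in>C. \<kappa>' x = \<kappa> x"
      by blast
    moreover from step this(1) have "stellar_step\<^sup>*\<^sup>* M M''"
      by (rule converse_rtranclp_into_rtranclp)
    ultimately show ?thesis
      by blast
  next
    case 3
    then have "proper_coloring M (nat (dim M + 1)) \<kappa>"
      by (rule proper_coloring_if_no_monochromatic_edges)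
    with subcomplex(2) show ?thesis
      by blast
  qed
qed

lemma admissible_initial:
  assumes "simplicial_complex L" "simplicial_complex K" "K \<subseteq> L"
    and "proper_coloring K (nat (dim K + 1)) \<kappa>"
  shows "admissible (nat (dim L + 1)) K L (vertices K) \<kappa> (\<lambda>_. {})"
proof unfold_locales
  have "finite L" "finite K"
    using assms(1,2) unfolding simplicial_complex_def by blast+
  then have "dim K \<le> dim L" "-1 \<le> dim L"
    using assms(3) by (auto intro: dim_le_dim dim_ge_minus_one)
  then show "int (nat (dim L + 1)) = dim L + 1"
    by simp
  show "vertices K \<subseteq> vertices L"
    using assms(3) unfolding vertices_def by blast
  fix x y \<sigma>
  show "x \<in> vertices K \<Longrightarrow> \<kappa> x < nat (dim L + 1)"
    using assms(4) \<open>dim K \<le> dim L\<close> unfolding proper_coloring_def by fastforce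
  show "{x, y} \<in> K \<Longrightarrow> x \<noteq> y \<Longrightarrow> \<kappa> x \<noteq> \<kappa> y"
    using assms(4) unfolding proper_coloring_def by blast
  show "\<sigma> \<in> L \<Longrightarrow> \<exists>\<sigma>'\<in>L. \<sigma> \<subseteq> \<sigma>' \<and> {} \<subseteq> \<kappa> ` (\<sigma>' \<inter> vertices K)"
    by blast
qed (use assms in auto)

theorem corollary3p2:
  fixes K L :: "'a set set" and \<kappa> :: "'a \<Rightarrow> nat"
  assumes "infinite (UNIV :: 'a set)"
    and "simplicial_complex L" and "simplicial_complex K" and "K \<subseteq> L"
    and "proper_coloring K (nat (dim K + 1)) \<kappa>"
  shows "\<exists>L' \<kappa>'. stellar_step\<^sup>*\<^sup>* L L' \<and> K \<subseteq> L' \<and> balanced L' \<and>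
           proper_coloring L' (nat (dim L' + 1)) \<kappa>' \<and> (\<forall>v\<in>vertices K. \<kappa>' v = \<kappa> v)"
proof -
  obtain L' \<kappa>' where "stellar_step\<^sup>*\<^sup>* L L'" "K \<subseteq> L'" "proper_coloring L' (nat (dim L' + 1)) \<kappa>'"
    "\<forall>v\<in>vertices K. \<kappa>' v = \<kappa> v"
    using admissible_balanced_subdivision[OF assms(1) admissible_initial[OF assms(2-5)]] by blast
  moreover from this(3) have "balanced L'"
    unfolding balanced_def by blast
  ultimately show ?thesis
    by blast
qed

end
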